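(* Let $(Y,\rho)$ be an infinite compact metric space, let $f:\{0,1\}^{\mathbb{N}}\to Y$ be a continuous surjection, let $\mathcal{D}_f=\{f^{-1}(y):y\in Y\}$ and $h:Y\to\mathcal{D}_f$, $h(y)=f^{-1}(y)$. Suppose $G:\{0,1\}^{\mathbb{N}}\to\{0,1\}^{\mathbb{N}}$ is a continuous onto map which is chaotic and satisfies $G(D)\in\mathcal{D}_f$ for every $D\in\mathcal{D}_f$, and let $H:\mathcal{D}_f\to\mathcal{D}_f$, $H(D)=G(D)$. Then $h$ is a homeomorphism onto $(\mathcal{D}_f,\tau(\mathcal{D}_f))$ and $F=h^{-1}\circ H\circ h:Y\to Y$ is a continuous onto map that is chaotic on $Y$.
   Context: $\{0,1\}^{\mathbb{N}}$ carries the product topology of the discrete topology on $\{0,1\}$, metrized by $d(\psi,\varphi)=\sum_{i\ge1}|\psi(i)-\varphi(i)|/2^i$. The decomposition topology on $\mathcal{D}_f$ is $\{\mathcal{U}\subset\mathcal{D}_f:\bigcup\mathcal{U}\text{ open}\}$. A map $g$ on a metric space $(Z,d)$ is chaotic (Devaney) if it is onto, topologically transitive (for nonempty open $U,V$ there is $n>0$ with $g^n(U)\cap V\neq\emptyset$), has a dense set of periodic points, and is sensitive to initial conditions (there is $\eta>0$ such that for every $x$ and neighbourhood $N$ of $x$ there are $y\in N$, $n\ge0$ with $d(g^n(x),g^n(y))>\eta$). *)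

theory Defs
  imports "HOL-Analysis.Analysis"
begin

text \<open>Cantor space {0,1}^N, coordinates i = 1,2,... encoded as nat => bool with
  index i-1; the metric is sum_i |psi(i)-phi(i)| / 2^i.\<close>
definition cantor_dist :: "(nat \<Rightarrow> bool) \<Rightarrow> (nat \<Rightarrow> bool) \<Rightarrow> real" where
  "cantor_dist \<psi> \<phi> = (\<Sum>i. (if \<psi> i = \<phi> i then 0 else 1) / 2 ^ (Suc i))"

definition cantor_top :: "(nat \<Rightarrow> bool) topology" where
  "cantor_top = Metric_space.mtopology UNIV cantor_dist"

definition chaotic :: "'a set \<Rightarrow> ('a \<Rightarrow> 'a \<Rightarrow> real) \<Rightarrow> ('a \<Rightarrow> 'a) \<Rightarrow> bool" where
  "chaotic M d g \<longleftrightarrow>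
     g ` M = M \<and>
     (\<forall>U V. openin (Metric_space.mtopology M d) U \<and> openin (Metric_space.mtopology M d) V
            \<and> U \<noteq> {} \<and> V \<noteq> {} \<longrightarrow> (\<exists>n>0. (g ^^ n) ` U \<inter> V \<noteq> {})) \<and>
     (Metric_space.mtopology M d) closure_of {x \<in> M. \<exists>n>0. (g ^^ n) x = x} = M \<and>
     (\<exists>\<eta>>0. \<forall>x\<in>M. \<forall>N. openin (Metric_space.mtopology M d) N \<and> x \<in> N \<longrightarrow>
            (\<exists>y\<in>N. \<exists>n. d ((g ^^ n) x) ((g ^^ n) y) > \<eta>))"

definition decomp_topology :: "'a topology \<Rightarrow> 'a set set \<Rightarrow> 'a set topology" where
  "decomp_topology X P = topology (\<lambda>\<U>. \<U> \<subseteq> P \<and> openin X (\<Union>\<U>))"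

end

theory Submission
  imports Defs
begin

text \<open>Since Cantor space is compact and \<open>Y\<close> is Hausdorff, \<open>f\<close> is a closed, hence a quotient,
  map; the decomposition topology on the fibres of \<open>f\<close> is exactly the quotient topology, so \<open>h\<close>
  is a homeomorphism. As \<open>G\<close> maps fibres onto fibres, \<open>F\<close> is the factor of \<open>G\<close> along \<open>f\<close>,
  i.e.\ \<open>F \<circ> f = f \<circ> G\<close>. Continuity of \<open>F\<close> then follows from the quotient property, and
  surjectivity, transitivity and density of periodic points pass from \<open>G\<close> to its factor.
  Sensitive dependence does not pass to factors in general, but on the infinite metric space \<open>Y\<close>
  it follows from the other two conditions (Banks, Brooks, Cairns, Davis, Stacey): a point is far
  from the orbit of one of two disjoint periodic orbits, and near it there are both a periodic
  point and a point shadowing that far orbit.\<close>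

section \<open>Cantor space\<close>

definition cantor_term :: "(nat \<Rightarrow> bool) \<Rightarrow> (nat \<Rightarrow> bool) \<Rightarrow> nat \<Rightarrow> real" where
  "cantor_term \<psi> \<phi> i = (if \<psi> i = \<phi> i then 0 else 1) / 2 ^ Suc i"

lemma cantor_dist_eq_suminf: "cantor_dist \<psi> \<phi> = (\<Sum>i. cantor_term \<psi> \<phi> i)"
  by (simp add: cantor_dist_def cantor_term_def)

lemma cantor_term_nonneg: "0 \<le> cantor_term \<psi> \<phi> i"
  by (simp add: cantor_term_def)

lemma cantor_term_le: "cantor_term \<psi> \<phi> i \<le> (1/2) ^ Suc i"
  by (simp add: cantor_term_def power_one_over)

lemma summable_cantor_term: "summable (cantor_term \<psi> \<phi>)"
  by (rule summable_comparison_test'[OF sums_summable[OF power_half_series]])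
    (simp only: real_norm_def abs_of_nonneg[OF cantor_term_nonneg] cantor_term_le)

lemma cantor_dist_ge_digit:
  assumes "\<psi> i \<noteq> \<phi> i"
  shows "1 / 2 ^ Suc i \<le> cantor_dist \<psi> \<phi>"
proof -
  have "cantor_term \<psi> \<phi> i = 1 / 2 ^ Suc i"
    using assms by (simp add: cantor_term_def)
  then show ?thesis
    using sum_le_suminf[OF summable_cantor_term, of "{i}" \<psi> \<phi>]
    by (simp add: cantor_dist_eq_suminf cantor_term_nonneg)
qed

lemma cantor_dist_le_prefix:
  assumes "\<forall>i<n. \<psi> i = \<phi> i"
  shows "cantor_dist \<psi> \<phi> \<le> 1 / 2 ^ n"
proof -
  have "cantor_dist \<psi> \<phi> = (\<Sum>i. cantor_term \<psi> \<phi> (i + n)) + (\<Sum>i<n. cantor_term \<psi> \<phi> i)"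
    unfolding cantor_dist_eq_suminf by (rule suminf_split_initial_segment[OF summable_cantor_term])
  also have "(\<Sum>i<n. cantor_term \<psi> \<phi> i) = 0"
    using assms by (simp add: cantor_term_def)
  also have "(\<Sum>i. cantor_term \<psi> \<phi> (i + n)) \<le> 1 / 2 ^ n"
  proof (rule sums_le)
    show "(\<lambda>i. cantor_term \<psi> \<phi> (i + n)) sums (\<Sum>i. cantor_term \<psi> \<phi> (i + n))"
      using summable_cantor_term summable_iff_shift summable_sums by blast
    show "(\<lambda>i. 1 / 2 ^ n * (1/2) ^ Suc i) sums (1 / 2 ^ n :: real)"
      using sums_mult[OF power_half_series, of "1 / 2 ^ n"] by simp
    show "cantor_term \<psi> \<phi> (i + n) \<le> 1 / 2 ^ n * (1/2) ^ Suc i" for i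
      using cantor_term_le[of \<psi> \<phi> "i + n"] by (simp add: power_add power_one_over mult_ac)
  qed
  finally show ?thesis by simp
qed

lemma Metric_space_cantor_dist: "Metric_space UNIV cantor_dist"
proof
  show "0 \<le> cantor_dist \<psi> \<phi>" for \<psi> \<phi>
    unfolding cantor_dist_eq_suminf by (simp add: suminf_nonneg summable_cantor_term cantor_term_nonneg)
  show "cantor_dist \<psi> \<phi> = cantor_dist \<phi> \<psi>" for \<psi> \<phi>
    unfolding cantor_dist_def by (rule arg_cong[where f = suminf]) (auto simp: fun_eq_iff)
  show "cantor_dist \<psi> \<phi> = 0 \<longleftrightarrow> \<psi> = \<phi>" for \<psi> \<phi>
  proof
    assume "cantor_dist \<psi> \<phi> = 0"
    show "\<psi> = \<phi>"
    proof (rule ext, rule ccontr)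
      fix i assume "\<psi> i \<noteq> \<phi> i"
      then have "1 / 2 ^ Suc i \<le> (0::real)"
        using cantor_dist_ge_digit \<open>cantor_dist \<psi> \<phi> = 0\<close> by metis
      moreover have "(0::real) < 1 / 2 ^ Suc i" by simp
      ultimately show False by linarith
    qed
  qed (simp add: cantor_dist_def)
  show "cantor_dist \<psi> \<xi> \<le> cantor_dist \<psi> \<phi> + cantor_dist \<phi> \<xi>" for \<psi> \<phi> \<xi>
  proof -
    have "(\<Sum>i. cantor_term \<psi> \<xi> i) \<le> (\<Sum>i. cantor_term \<psi> \<phi> i + cantor_term \<phi> \<xi> i)"
    proof (rule suminf_le)
      show "cantor_term \<psi> \<xi> i \<le> cantor_term \<psi> \<phi> i + cantor_term \<phi> \<xi> i" for i
        by (simp add: cantor_term_def)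
    qed (intro summable_add summable_cantor_term)+
    also have "\<dots> = (\<Sum>i. cantor_term \<psi> \<phi> i) + (\<Sum>i. cantor_term \<phi> \<xi> i)"
      by (rule suminf_add[OF summable_cantor_term summable_cantor_term, symmetric])
    finally show ?thesis by (simp add: cantor_dist_eq_suminf)
  qed
qed

interpretation Cantor: Metric_space UNIV cantor_dist
  by (rule Metric_space_cantor_dist)

lemma prefix_cylinder_subset_mball:
  assumes "r > 0"
  obtains n where "{\<phi>. \<forall>i<n. \<phi> i = \<psi> i} \<subseteq> Cantor.mball \<psi> r"
proof -
  obtain n where n: "1 / 2 ^ n < r"
    using real_arch_pow_inv[OF assms, of "1/2"] by (auto simp: power_one_over)
  have "cantor_dist \<psi> \<phi> < r" if "\<forall>i<n. \<phi> i = \<psi> i" for \<phi>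
    using cantor_dist_le_prefix[of n \<psi> \<phi>] that n by fastforce
  then show thesis by (intro that) auto
qed

lemma mball_subset_prefix_cylinder: "Cantor.mball \<psi> (1 / 2 ^ n) \<subseteq> {\<phi>. \<forall>i<n. \<phi> i = \<psi> i}"
proof (clarsimp, rule ccontr)
  fix \<phi> i assume "cantor_dist \<psi> \<phi> < 1 / 2 ^ n" "i < n" "\<phi> i \<noteq> \<psi> i"
  moreover have "(1::real) / 2 ^ n \<le> 1 / 2 ^ Suc i"
    using \<open>i < n\<close> by (intro divide_left_mono power_increasing) auto
  ultimately show False using cantor_dist_ge_digit[of \<psi> i \<phi>] by auto
qed

lemma openin_cantor_top_iff_prefix:
  "openin cantor_top U \<longleftrightarrow> (\<forall>\<psi>\<in>U. \<exists>n. {\<phi>. \<forall>i<n. \<phi> i = \<psi> i} \<subseteq> U)"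
proof -
  have "(\<exists>r>0. Cantor.mball \<psi> r \<subseteq> U) \<longleftrightarrow> (\<exists>n. {\<phi>. \<forall>i<n. \<phi> i = \<psi> i} \<subseteq> U)" for \<psi>
  proof
    assume "\<exists>r>0. Cantor.mball \<psi> r \<subseteq> U"
    then obtain r where "r > 0" "Cantor.mball \<psi> r \<subseteq> U" by blast
    moreover obtain n where "{\<phi>. \<forall>i<n. \<phi> i = \<psi> i} \<subseteq> Cantor.mball \<psi> r"
      using prefix_cylinder_subset_mball[OF \<open>r > 0\<close>] .
    ultimately show "\<exists>n. {\<phi>. \<forall>i<n. \<phi> i = \<psi> i} \<subseteq> U" by blast
  next
    assume "\<exists>n. {\<phi>. \<forall>i<n. \<phi> i = \<psi> i} \<subseteq> U"
    then obtain n where "{\<phi>. \<forall>i<n. \<phi> i = \<psi> i} \<subseteq> U" ..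
    then have "Cantor.mball \<psi> (1 / 2 ^ n) \<subseteq> U"
      using mball_subset_prefix_cylinder by (rule order_trans[rotated])
    moreover have "(0::real) < 1 / 2 ^ n" by simp
    ultimately show "\<exists>r>0. Cantor.mball \<psi> r \<subseteq> U" by blast
  qed
  then show ?thesis
    unfolding cantor_top_def Cantor.openin_mtopology by (simp add: Ball_def)
qed

lemma openin_discrete_product_iff_prefix:
  fixes U :: "(nat \<Rightarrow> 'a) set"
  shows "openin (product_topology (\<lambda>_. discrete_topology UNIV) UNIV) U \<longleftrightarrow>
           (\<forall>\<psi>\<in>U. \<exists>n. {\<phi>. \<forall>i<n. \<phi> i = \<psi> i} \<subseteq> U)"
proof -
  have "(\<exists>V. finite {i. V i \<noteq> UNIV} \<and> \<psi> \<in> Pi\<^sub>E UNIV V \<and> Pi\<^sub>E UNIV V \<subseteq> U) \<longleftrightarrow>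
        (\<exists>n. {\<phi>. \<forall>i<n. \<phi> i = \<psi> i} \<subseteq> U)" for \<psi>
  proof
    assume "\<exists>V. finite {i. V i \<noteq> UNIV} \<and> \<psi> \<in> Pi\<^sub>E UNIV V \<and> Pi\<^sub>E UNIV V \<subseteq> U"
    then obtain V where V: "finite {i. V i \<noteq> UNIV}" "\<psi> \<in> Pi\<^sub>E UNIV V" "Pi\<^sub>E UNIV V \<subseteq> U"
      by (elim exE conjE)
    obtain n where n: "{i. V i \<noteq> UNIV} \<subseteq> {..<n}"
      using finite_nat_bounded[OF V(1)] ..
    have "{\<phi>. \<forall>i<n. \<phi> i = \<psi> i} \<subseteq> Pi\<^sub>E UNIV V"
    proof (clarsimp simp: PiE_iff)
      fix \<phi> i assume "\<forall>i<n. \<phi> i = \<psi> i"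
      show "\<phi> i \<in> V i"
      proof (cases "i < n")
        case True
        then show ?thesis using V(2) \<open>\<forall>i<n. \<phi> i = \<psi> i\<close> by (simp add: PiE_iff)
      next
        case False
        then have "V i = UNIV" using n by auto
        then show ?thesis by simp
      qed
    qed
    then show "\<exists>n. {\<phi>. \<forall>i<n. \<phi> i = \<psi> i} \<subseteq> U"
      using V(3) by (intro exI[of _ n]) (rule order_trans)
  next
    assume "\<exists>n. {\<phi>. \<forall>i<n. \<phi> i = \<psi> i} \<subseteq> U"
    then obtain n where n: "{\<phi>. \<forall>i<n. \<phi> i = \<psi> i} \<subseteq> U" ..
    define V where "V i = (if i < n then {\<psi> i} else UNIV)" for i
    have "finite {i. V i \<noteq> UNIV}"
      by (rule finite_subset[of _ "{..<n}"]) (auto simp: V_def)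
    moreover have "Pi\<^sub>E UNIV V = {\<phi>. \<forall>i<n. \<phi> i = \<psi> i}"
      by (auto simp: V_def PiE_iff) (metis singletonD)
    ultimately show "\<exists>V. finite {i. V i \<noteq> UNIV} \<and> \<psi> \<in> Pi\<^sub>E UNIV V \<and> Pi\<^sub>E UNIV V \<subseteq> U"
      using n by blast
  qed
  then show ?thesis
    by (simp add: openin_product_topology_alt)
qed

lemma cantor_top_eq_product_topology:
  "cantor_top = product_topology (\<lambda>_. discrete_topology UNIV) UNIV"
  by (simp add: topology_eq openin_cantor_top_iff_prefix openin_discrete_product_iff_prefix)

lemma compact_space_cantor_top: "compact_space cantor_top"
  by (simp add: cantor_top_eq_product_topology compact_space_product_topology compact_space_discrete_topology)

lemma topspace_cantor_top [simp]: "topspace cantor_top = UNIV"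
  by (simp add: cantor_top_def)

section \<open>Periodic orbits and Banks' theorem\<close>

definition forward_orbit :: "('a \<Rightarrow> 'a) \<Rightarrow> 'a \<Rightarrow> 'a set" where
  "forward_orbit g x = range (\<lambda>n. (g ^^ n) x)"

definition periodic_points :: "'a set \<Rightarrow> ('a \<Rightarrow> 'a) \<Rightarrow> 'a set" where
  "periodic_points M g = {x \<in> M. \<exists>n>0. (g ^^ n) x = x}"

definition top_transitive :: "'a topology \<Rightarrow> ('a \<Rightarrow> 'a) \<Rightarrow> bool" where
  "top_transitive X g \<longleftrightarrow>
     (\<forall>U V. openin X U \<and> openin X V \<and> U \<noteq> {} \<and> V \<noteq> {} \<longrightarrow> (\<exists>n>0. (g ^^ n) ` U \<inter> V \<noteq> {}))"

lemma funpow_in_invariant: "g ` M \<subseteq> M \<Longrightarrow> x \<in> M \<Longrightarrow> (g ^^ n) x \<in> M"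
  by (induction n) auto

lemma continuous_map_funpow: "continuous_map X X g \<Longrightarrow> continuous_map X X (g ^^ n)"
  by (induction n) (auto intro: continuous_map_compose)

lemma forward_orbit_subset: "g ` M \<subseteq> M \<Longrightarrow> x \<in> M \<Longrightarrow> forward_orbit g x \<subseteq> M"
  by (auto simp: forward_orbit_def funpow_in_invariant)

lemma finite_forward_orbit:
  assumes "(g ^^ p) x = x" "p > 0"
  shows "finite (forward_orbit g x)"
proof -
  have "forward_orbit g x \<subseteq> (\<lambda>n. (g ^^ n) x) ` {..<p}"
  proof
    fix y assume "y \<in> forward_orbit g x"
    then obtain n where "y = (g ^^ n) x" by (auto simp: forward_orbit_def)
    then have "y = (g ^^ (n mod p)) x" by (simp add: funpow_mod_eq[OF assms(1)])
    then show "y \<in> (\<lambda>n. (g ^^ n) x) ` {..<p}" using assms(2) by simp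
  qed
  then show ?thesis by (rule finite_subset) simp
qed

lemma forward_orbit_trans: "y \<in> forward_orbit g x \<Longrightarrow> forward_orbit g y \<subseteq> forward_orbit g x"
  by (auto simp: forward_orbit_def) (metis comp_apply funpow_add rangeI)

lemma periodic_in_forward_orbit:
  assumes "(g ^^ p) x = x" "p > 0" "y \<in> forward_orbit g x"
  shows "x \<in> forward_orbit g y"
proof -
  obtain j where y: "y = (g ^^ j) x" using assms(3) by (auto simp: forward_orbit_def)
  have "j * p - j + j = j * p"
    using assms(2) by simp
  then have "(g ^^ (j * p - j)) y = (g ^^ (j * p)) x"
    by (metis y comp_apply funpow_add)
  also have "\<dots> = x"
    using funpow_mod_eq[OF assms(1), of "j * p"] by simp
  finally show ?thesis unfolding forward_orbit_def by (metis rangeI)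
qed

context Metric_space
begin

lemma chaoticD:
  assumes "chaotic M d g"
  shows "g ` M = M" "top_transitive mtopology g"
    "mtopology closure_of periodic_points M g = M"
  using assms by (simp_all add: chaotic_def top_transitive_def periodic_points_def)

lemma finite_disjoint_separated:
  assumes "finite A" "finite B" "A \<subseteq> M" "B \<subseteq> M" "A \<inter> B = {}"
  obtains \<delta> where "\<delta> > 0" "\<And>a b. a \<in> A \<Longrightarrow> b \<in> B \<Longrightarrow> \<delta> \<le> d a b"
proof
  let ?D = "insert 1 ((\<lambda>(a, b). d a b) ` (A \<times> B))"
  have "finite ?D" using assms(1,2) by simp
  moreover have "0 < d a b" if "a \<in> A" "b \<in> B" for a b
    using that assms(3-5) by (intro mdist_pos_less) auto
  ultimately show "Min ?D > 0" by auto
  show "Min ?D \<le> d a b" if "a \<in> A" "b \<in> B" for a b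
    using \<open>finite ?D\<close> that by (intro Min_le) auto
qed

lemma periodic_points_disjoint_orbits:
  assumes "infinite M" "g ` M \<subseteq> M" "mtopology closure_of periodic_points M g = M"
  obtains p q where "p \<in> periodic_points M g" "q \<in> periodic_points M g"
    "forward_orbit g p \<inter> forward_orbit g q = {}"
proof -
  let ?P = "periodic_points M g"
  obtain p where p: "p \<in> ?P"
    using assms(1,3) by (metis closure_of_empty ex_in_conv finite.emptyI)
  then have "p \<in> M" "finite (forward_orbit g p)"
    using finite_forward_orbit by (auto simp: periodic_points_def)
  moreover have "t1_space mtopology"
    by (rule Hausdorff_imp_t1_space[OF Hausdorff_space_mtopology])
  ultimately have "closedin mtopology (forward_orbit g p)"
    using forward_orbit_subset[OF assms(2)] by (simp add: t1_space_closedin_finite)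
  have "\<not> ?P \<subseteq> forward_orbit g p"
  proof
    assume "?P \<subseteq> forward_orbit g p"
    then have "M \<subseteq> forward_orbit g p"
      using closure_of_minimal \<open>closedin mtopology (forward_orbit g p)\<close> assms(3) by metis
    then have "finite M"
      using \<open>finite (forward_orbit g p)\<close> by (rule finite_subset)
    with assms(1) show False ..
  qed
  then obtain q where q: "q \<in> ?P" "q \<notin> forward_orbit g p" by blast
  have "forward_orbit g p \<inter> forward_orbit g q = {}"
  proof (rule ccontr)
    assume "forward_orbit g p \<inter> forward_orbit g q \<noteq> {}"
    then obtain z where z: "z \<in> forward_orbit g p" "z \<in> forward_orbit g q" by blast
    obtain n where "(g ^^ n) q = q" "n > 0"
      using q(1) by (auto simp: periodic_points_def)
    then have "q \<in> forward_orbit g z"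
      using z(2) by (rule periodic_in_forward_orbit)
    then have "q \<in> forward_orbit g p"
      using forward_orbit_trans[OF z(1)] by blast
    with q(2) show False ..
  qed
  with p q(1) show thesis by (rule that)
qed

lemma far_from_some_periodic_orbit:
  assumes "infinite M" "g ` M \<subseteq> M" "mtopology closure_of periodic_points M g = M"
  obtains \<delta> where "\<delta> > 0"
    "\<And>x. x \<in> M \<Longrightarrow> \<exists>q \<in> periodic_points M g. \<forall>n. \<delta> \<le> d x ((g ^^ n) q)"
proof -
  obtain p q where pq: "p \<in> periodic_points M g" "q \<in> periodic_points M g"
    "forward_orbit g p \<inter> forward_orbit g q = {}"
    using periodic_points_disjoint_orbits[OF assms] .
  have M: "p \<in> M" "q \<in> M" and fin: "finite (forward_orbit g p)" "finite (forward_orbit g q)"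
    using pq(1,2) finite_forward_orbit by (auto simp: periodic_points_def)
  obtain \<epsilon> where "\<epsilon> > 0" and
    sep: "\<And>a b. a \<in> forward_orbit g p \<Longrightarrow> b \<in> forward_orbit g q \<Longrightarrow> \<epsilon> \<le> d a b"
    by (rule finite_disjoint_separated[OF fin forward_orbit_subset[OF assms(2) M(1)]
          forward_orbit_subset[OF assms(2) M(2)] pq(3)]) blast
  have "\<exists>r \<in> periodic_points M g. \<forall>n. \<epsilon> / 2 \<le> d x ((g ^^ n) r)" if "x \<in> M" for x
  proof (rule ccontr)
    assume "\<not> ?thesis"
    then have "\<not> (\<forall>n. \<epsilon> / 2 \<le> d x ((g ^^ n) p))" "\<not> (\<forall>n. \<epsilon> / 2 \<le> d x ((g ^^ n) q))"
      using pq(1,2) by blast+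
    then obtain i j where "d x ((g ^^ i) p) < \<epsilon> / 2" "d x ((g ^^ j) q) < \<epsilon> / 2"
      by (auto simp: not_le)
    moreover have "\<epsilon> \<le> d ((g ^^ i) p) ((g ^^ j) q)"
      by (rule sep) (auto simp: forward_orbit_def)
    moreover have "d ((g ^^ i) p) ((g ^^ j) q) \<le> d x ((g ^^ i) p) + d x ((g ^^ j) q)"
      using triangle''[of "(g ^^ i) p" x "(g ^^ j) q"] that
        funpow_in_invariant[OF assms(2) M(1)] funpow_in_invariant[OF assms(2) M(2)] by simp
    ultimately show False by linarith
  qed
  then show thesis
    using that[of "\<epsilon> / 2"] \<open>\<epsilon> > 0\<close> by simp
qed

lemma transitive_shadows_orbit_segment:
  assumes "continuous_map mtopology mtopology g" "top_transitive mtopology g"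
    and "openin mtopology B" "B \<noteq> {}" "q \<in> M" "n > 0" "\<epsilon> > 0"
  obtains y m r where "y \<in> B" "n dvd m" "d ((g ^^ r) q) ((g ^^ m) y) < \<epsilon>"
proof -
  have gM: "g ` M \<subseteq> M"
    using continuous_map_image_subset_topspace[OF assms(1)] by simp
  \<comment> \<open>points of \<open>W\<close> follow the orbit of \<open>q\<close> for \<open>n\<close> steps, so the transitivity time may be
    rounded up to a multiple of \<open>n\<close>\<close>
  define W where "W = (\<Inter>i\<le>n. {z \<in> M. (g ^^ i) z \<in> mball ((g ^^ i) q) \<epsilon>})"
  have "openin mtopology W"
    unfolding W_def
  proof (intro openin_INT2)
    fix i
    show "openin mtopology {z \<in> M. (g ^^ i) z \<in> mball ((g ^^ i) q) \<epsilon>}"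
      using openin_continuous_map_preimage[OF continuous_map_funpow[OF assms(1)] openin_mball]
      by simp
  qed auto
  moreover have "q \<in> W"
    using assms(5,7) funpow_in_invariant[OF gM] by (auto simp: W_def)
  ultimately obtain k y where "k > 0" "y \<in> B" "(g ^^ k) y \<in> W"
    using assms(2-4) unfolding top_transitive_def by blast
  define m where "m = n * (k div n + 1)"
  have "m = n * (k div n) + n" "n * (k div n) + k mod n = k" "k mod n < n"
    using assms(6) by (simp_all add: m_def)
  then have "k \<le> m" "m - k \<le> n"
    by linarith+
  then have "(g ^^ (m - k)) ((g ^^ k) y) \<in> mball ((g ^^ (m - k)) q) \<epsilon>"
    using \<open>(g ^^ k) y \<in> W\<close> by (auto simp: W_def)
  moreover have "(g ^^ (m - k)) ((g ^^ k) y) = (g ^^ m) y"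
    using \<open>k \<le> m\<close> by (metis comp_apply funpow_add le_add_diff_inverse2)
  ultimately show thesis
    using that[of y m "m - k"] \<open>y \<in> B\<close> by (simp add: m_def)
qed

lemma periodic_and_shadowing_points_near:
  assumes "continuous_map mtopology mtopology g" "top_transitive mtopology g"
    and "mtopology closure_of periodic_points M g = M"
    and "openin mtopology B" "x \<in> B" "q \<in> M" "\<epsilon> > 0"
  obtains p y m r where "p \<in> B" "(g ^^ m) p = p" "y \<in> B" "d ((g ^^ r) q) ((g ^^ m) y) < \<epsilon>"
proof -
  have "x \<in> mtopology closure_of periodic_points M g"
    using assms(3,5) openin_subset[OF assms(4)] by auto
  then obtain p where p: "p \<in> periodic_points M g" "p \<in> B"
    using assms(4,5) by (auto simp: in_closure_of)
  then obtain n where "n > 0" "(g ^^ n) p = p"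
    by (auto simp: periodic_points_def)
  obtain y m r where "y \<in> B" "n dvd m" "d ((g ^^ r) q) ((g ^^ m) y) < \<epsilon>"
    using transitive_shadows_orbit_segment[OF assms(1,2,4) _ assms(6) \<open>n > 0\<close> assms(7)] assms(5)
    by blast
  moreover have "(g ^^ m) p = p"
    using \<open>n dvd m\<close> funpow_mod_eq[OF \<open>(g ^^ n) p = p\<close>, of m] by simp
  ultimately show thesis
    using that p(2) by blast
qed

theorem chaotic_if_transitive_dense_periodic:
  assumes "infinite M" "continuous_map mtopology mtopology g" "g ` M = M"
    and "top_transitive mtopology g" "mtopology closure_of periodic_points M g = M"
  shows "chaotic M d g"
proof -
  have gM: "g ` M \<subseteq> M"
    using assms(3) by simp
  obtain \<delta> where "\<delta> > 0" and
    far: "\<And>x. x \<in> M \<Longrightarrow> \<exists>q \<in> periodic_points M g. \<forall>n. \<delta> \<le> d x ((g ^^ n) q)"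
    by (rule far_from_some_periodic_orbit[OF assms(1) gM assms(5)]) blast
  define \<eta> where "\<eta> = \<delta> / 4"
  have "\<eta> > 0" using \<open>\<delta> > 0\<close> by (simp add: \<eta>_def)
  have "\<exists>y\<in>N. \<exists>k. \<eta> < d ((g ^^ k) x) ((g ^^ k) y)"
    if x: "x \<in> M" and N: "openin mtopology N" "x \<in> N" for x N
  proof (rule ccontr)
    assume none: "\<not> ?thesis"
    obtain q where q: "q \<in> periodic_points M g" "\<forall>i. \<delta> \<le> d x ((g ^^ i) q)"
      using far[OF x] ..
    then have "q \<in> M" by (simp add: periodic_points_def)
    define B where "B = N \<inter> mball x \<eta>"
    have "openin mtopology B" "x \<in> B"
      using x N \<open>\<eta> > 0\<close> by (auto simp: B_def)
    then obtain p y m r where p: "p \<in> B" "(g ^^ m) p = p"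
      and y: "y \<in> B" "d ((g ^^ r) q) ((g ^^ m) y) < \<eta>"
      by (rule periodic_and_shadowing_points_near[OF assms(2,4,5) _ _ \<open>q \<in> M\<close> \<open>\<eta> > 0\<close>])
    have in_M: "p \<in> M" "(g ^^ m) x \<in> M" "(g ^^ m) y \<in> M" "(g ^^ r) q \<in> M"
      using x p(1) y(1) \<open>q \<in> M\<close> funpow_in_invariant[OF gM] by (auto simp: B_def)
    have "\<not> \<eta> < d ((g ^^ m) x) ((g ^^ m) p)" "\<not> \<eta> < d ((g ^^ m) x) ((g ^^ m) y)"
      using none p(1) y(1) by (auto simp: B_def)
    then have "d p ((g ^^ m) x) \<le> \<eta>" "d ((g ^^ m) x) ((g ^^ m) y) \<le> \<eta>"
      using p(2) commute[of p "(g ^^ m) x"] by (simp_all add: not_less)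
    \<comment> \<open>so \<open>x\<close> would be \<open>4\<eta> = \<delta>\<close>-close to a point of the orbit of \<open>q\<close>\<close>
    moreover have "d x ((g ^^ r) q) \<le> d x p + d p ((g ^^ m) x)
        + d ((g ^^ m) x) ((g ^^ m) y) + d ((g ^^ m) y) ((g ^^ r) q)"
      using triangle[of x p "(g ^^ r) q"] triangle[of p "(g ^^ m) x" "(g ^^ r) q"]
        triangle[of "(g ^^ m) x" "(g ^^ m) y" "(g ^^ r) q"] x in_M by linarith
    moreover have "d x p < \<eta>" "d ((g ^^ m) y) ((g ^^ r) q) < \<eta>"
      using p(1) y(2) commute[of "(g ^^ m) y"] by (simp_all add: B_def)
    ultimately have "d x ((g ^^ r) q) < \<delta>"
      by (simp add: \<eta>_def)
    with q(2) show False by (simp add: not_less[symmetric])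
  qed
  then show ?thesis
    using assms(3-5) \<open>\<eta> > 0\<close>
    unfolding chaotic_def top_transitive_def periodic_points_def by blast
qed

end

section \<open>Factors along quotient maps\<close>

lemma funpow_semiconj: "F \<circ> f = f \<circ> G \<Longrightarrow> (F ^^ n) (f x) = f ((G ^^ n) x)"
  by (induction n) (auto simp: fun_eq_iff)

lemma image_semiconj: "F \<circ> f = f \<circ> G \<Longrightarrow> F ` f ` A = f ` G ` A"
  by (metis image_comp)

lemma top_transitive_semiconj:
  assumes "continuous_map X Y f" "f ` topspace X = topspace Y" "F \<circ> f = f \<circ> G"
    and "top_transitive X G"
  shows "top_transitive Y F"
  unfolding top_transitive_def
proof (intro allI impI)
  fix U V assume UV: "openin Y U \<and> openin Y V \<and> U \<noteq> {} \<and> V \<noteq> {}"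
  let ?U = "{x \<in> topspace X. f x \<in> U}" and ?V = "{x \<in> topspace X. f x \<in> V}"
  have "openin X ?U" "openin X ?V"
    using UV openin_continuous_map_preimage[OF assms(1)] by auto
  moreover have "U \<subseteq> f ` topspace X" "V \<subseteq> f ` topspace X"
    using UV openin_subset assms(2) by metis+
  then have "?U \<noteq> {}" "?V \<noteq> {}"
    using UV by blast+
  ultimately obtain n x where "n > 0" "x \<in> ?U" "(G ^^ n) x \<in> ?V"
    using assms(4) unfolding top_transitive_def by blast
  then have "(F ^^ n) (f x) \<in> (F ^^ n) ` U \<inter> V"
    using funpow_semiconj[OF assms(3), of n x] by (metis (mono_tags, lifting) IntI imageI mem_Collect_eq)
  then show "\<exists>n>0. (F ^^ n) ` U \<inter> V \<noteq> {}"
    using \<open>n > 0\<close> by blast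
qed

lemma dense_periodic_points_semiconj:
  assumes "continuous_map X Y f" "f ` topspace X = topspace Y" "F \<circ> f = f \<circ> G"
    and "X closure_of periodic_points (topspace X) G = topspace X"
  shows "Y closure_of periodic_points (topspace Y) F = topspace Y"
proof
  show "Y closure_of periodic_points (topspace Y) F \<subseteq> topspace Y"
    by (rule closure_of_subset_topspace)
  have "f ` periodic_points (topspace X) G \<subseteq> periodic_points (topspace Y) F"
    using assms(2) funpow_semiconj[OF assms(3)] by (fastforce simp: periodic_points_def)
  then have "f ` (X closure_of periodic_points (topspace X) G) \<subseteq> Y closure_of periodic_points (topspace Y) F"
    using continuous_map_image_closure_subset[OF assms(1)] closure_of_mono by blast
  then show "topspace Y \<subseteq> Y closure_of periodic_points (topspace Y) F"
    using assms(2,4) by simp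
qed

lemma openin_decomp_topology:
  assumes "disjoint P"
  shows "openin (decomp_topology X P) \<U> \<longleftrightarrow> \<U> \<subseteq> P \<and> openin X (\<Union>\<U>)"
proof -
  have Union_Int: "\<Union>(\<S> \<inter> \<T>) = \<Union>\<S> \<inter> \<Union>\<T>" if "\<S> \<subseteq> P" "\<T> \<subseteq> P" for \<S> \<T>
  proof
    show "\<Union>\<S> \<inter> \<Union>\<T> \<subseteq> \<Union>(\<S> \<inter> \<T>)"
    proof
      fix x assume "x \<in> \<Union>\<S> \<inter> \<Union>\<T>"
      then obtain A B where AB: "A \<in> \<S>" "B \<in> \<T>" "x \<in> A" "x \<in> B" by blast
      then have "A = B"
        using disjointD[OF assms] that by blast
      with AB show "x \<in> \<Union>(\<S> \<inter> \<T>)" by blast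
    qed
  qed blast
  have "istopology (\<lambda>\<U>. \<U> \<subseteq> P \<and> openin X (\<Union>\<U>))"
    unfolding istopology_def
  proof (intro conjI allI impI)
    fix \<S> \<T> assume "\<S> \<subseteq> P \<and> openin X (\<Union>\<S>)" "\<T> \<subseteq> P \<and> openin X (\<Union>\<T>)"
    then show "\<S> \<inter> \<T> \<subseteq> P" "openin X (\<Union>(\<S> \<inter> \<T>))"
      using Union_Int by auto
  next
    fix \<K> assume \<K>: "\<forall>\<S>\<in>\<K>. \<S> \<subseteq> P \<and> openin X (\<Union>\<S>)"
    then show "\<Union>\<K> \<subseteq> P" by blast
    have "\<Union>(\<Union>\<K>) = \<Union>(Union ` \<K>)" by blast
    then show "openin X (\<Union>(\<Union>\<K>))"
      using \<K> by auto
  qed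
  then show ?thesis
    by (simp add: decomp_topology_def)
qed

lemma topspace_decomp_topology:
  assumes "disjoint P" "\<Union>P = topspace X"
  shows "topspace (decomp_topology X P) = P"
proof
  show "topspace (decomp_topology X P) \<subseteq> P"
    using openin_decomp_topology[OF assms(1)] by (auto simp: topspace_def)
  have "openin (decomp_topology X P) P"
    using openin_decomp_topology[OF assms(1)] assms(2) by simp
  then show "P \<subseteq> topspace (decomp_topology X P)"
    by (rule openin_subset)
qed

lemma homeomorphic_map_fibres:
  assumes "quotient_map X Y f" "topspace X = UNIV"
  shows "homeomorphic_map Y (decomp_topology X {f -` {y} | y. y \<in> topspace Y}) (\<lambda>y. f -` {y})"
proof -
  let ?P = "{f -` {y} | y. y \<in> topspace Y}" and ?h = "\<lambda>y. f -` {y}"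
  have onto: "range f = topspace Y"
    using assms by (simp add: quotient_map_def)
  have quot: "openin X {x \<in> topspace X. f x \<in> V} \<longleftrightarrow> openin Y V" if "V \<subseteq> topspace Y" for V
    using assms(1) that by (simp add: quotient_map_def)
  have "disjoint ?P"
    by (auto simp: disjoint_def)
  moreover have "\<Union>?P = topspace X"
    using onto assms(2) by blast
  ultimately have top: "topspace (decomp_topology X ?P) = ?P"
    by (rule topspace_decomp_topology)
  have "?h ` topspace Y = ?P"
    by blast
  moreover have "inj_on ?h (topspace Y)"
  proof (rule inj_onI)
    fix a b assume "a \<in> topspace Y" "?h a = ?h b"
    then obtain x where "f x = a"
      using onto by (metis rangeE)
    then have "x \<in> ?h b"
      using \<open>?h a = ?h b\<close> by blast
    with \<open>f x = a\<close> show "a = b" by simp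
  qed
  moreover have "openin Y {y \<in> topspace Y. ?h y \<in> \<U>} \<longleftrightarrow> openin (decomp_topology X ?P) \<U>"
    if "\<U> \<subseteq> ?P" for \<U>
  proof -
    have "{x \<in> topspace X. f x \<in> {y \<in> topspace Y. ?h y \<in> \<U>}} = \<Union>\<U>"
      using that onto assms(2) by auto
    then show ?thesis
      using quot[of "{y \<in> topspace Y. ?h y \<in> \<U>}"] that
        openin_decomp_topology[OF \<open>disjoint ?P\<close>] by simp
  qed
  ultimately show ?thesis
    unfolding homeomorphic_map_def quotient_map_def top by simp
qed

lemma fibre_preserving_factor_semiconj:
  assumes "range f = Y"
    and "\<forall>D \<in> {f -` {y} | y. y \<in> Y}. G ` D \<in> {f -` {y} | y. y \<in> Y}"
  shows "(\<lambda>y. inv_into Y (\<lambda>y. f -` {y}) (G ` (f -` {y}))) \<circ> f = f \<circ> G"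
proof
  fix x
  have "inj_on (\<lambda>y. f -` {y}) Y"
    using assms(1) by (auto intro!: inj_onI)
  obtain y where "y \<in> Y" "G ` (f -` {f x}) = f -` {y}"
    using assms by blast
  moreover have "G x \<in> G ` (f -` {f x})"
    by simp
  ultimately show "((\<lambda>y. inv_into Y (\<lambda>y. f -` {y}) (G ` (f -` {y}))) \<circ> f) x = (f \<circ> G) x"
    using inv_into_f_f[OF \<open>inj_on _ Y\<close> \<open>y \<in> Y\<close>] by simp
qed

theorem mainTheorem7:
  fixes Y :: "'b set" and \<rho> :: "'b \<Rightarrow> 'b \<Rightarrow> real"
    and f :: "(nat \<Rightarrow> bool) \<Rightarrow> 'b"
    and G :: "(nat \<Rightarrow> bool) \<Rightarrow> (nat \<Rightarrow> bool)"
  assumes "Metric_space Y \<rho>"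
    and "compact_space (Metric_space.mtopology Y \<rho>)"
    and "infinite Y"
    and "continuous_map cantor_top (Metric_space.mtopology Y \<rho>) f"
    and "f ` UNIV = Y"
    and "continuous_map cantor_top cantor_top G"
    and "surj G"
    and "chaotic UNIV cantor_dist G"
    and "\<forall>D \<in> {f -` {y} | y. y \<in> Y}. G ` D \<in> {f -` {y} | y. y \<in> Y}"
  shows "let Df = {f -` {y} | y. y \<in> Y};
             h = (\<lambda>y. f -` {y});
             H = (\<lambda>D. G ` D);
             F = (\<lambda>y. inv_into Y h (H (h y)))
         in homeomorphic_map (Metric_space.mtopology Y \<rho>) (decomp_topology cantor_top Df) h
          \<and> continuous_map (Metric_space.mtopology Y \<rho>) (Metric_space.mtopology Y \<rho>) F
          \<and> F ` Y = Y
          \<and> chaotic Y \<rho> F"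
proof -
  interpret Y: Metric_space Y \<rho> by fact
  let ?h = "\<lambda>y. f -` {y}"
  let ?F = "\<lambda>y. inv_into Y ?h (G ` ?h y)"
  have onto: "f ` topspace cantor_top = topspace Y.mtopology"
    using assms(5) by simp
  have quot: "quotient_map cantor_top Y.mtopology f"
    using continuous_imp_closed_map_gen[OF compact_space_cantor_top
        Hausdorff_imp_kc_space[OF Y.Hausdorff_space_mtopology] assms(4)]
    by (rule continuous_closed_imp_quotient_map[OF assms(4) _ onto])
  have semiconj: "?F \<circ> f = f \<circ> G"
    by (rule fibre_preserving_factor_semiconj[OF assms(5,9)])
  have F_onto: "?F ` Y = Y"
    using image_semiconj[OF semiconj, of UNIV] assms(5,7) by simp
  have F_cont: "continuous_map Y.mtopology Y.mtopology ?F"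
    by (rule continuous_compose_quotient_map[OF quot])
      (simp add: semiconj continuous_map_compose[OF assms(6,4)])
  have "top_transitive cantor_top G"
    and "cantor_top closure_of periodic_points (topspace cantor_top) G = topspace cantor_top"
    using Cantor.chaoticD[OF assms(8)] by (simp_all flip: cantor_top_def)
  then have "top_transitive Y.mtopology ?F" and "Y.mtopology closure_of periodic_points Y ?F = Y"
    using top_transitive_semiconj[OF assms(4) onto semiconj]
      dense_periodic_points_semiconj[OF assms(4) onto semiconj] by simp_all
  then have "chaotic Y \<rho> ?F"
    by (rule Y.chaotic_if_transitive_dense_periodic[OF assms(3) F_cont F_onto])
  then show ?thesis
    using homeomorphic_map_fibres[OF quot] F_cont F_onto
    unfolding Let_def by simp
qed

end
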